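(* Let $S$ be an eventually regular semigroup with a primitive idempotent $e$. Then the ideal of $S$ generated by $e$ is completely simple (and $J_e$ is the minimum $\mathcal J$-class of $S$).
   Context: $S$ is eventually regular if for each $a\in S$ there are $n\ge1$, $b\in S$ with $a^nba^n=a^n$. An idempotent $e$ is primitive if for every idempotent $f$ with $ef=fe=f$ one has $f=e$. $J_e$ denotes the Green's $\mathcal J$-class of $e$. *)

theory Defs
  imports Main
begin

text \<open>The semigroup S is the whole carrier of a type of class semigroup_mult.\<close>

text \<open>Positive powers in a semigroup: spow a n = a to the power (n+1).\<close>
fun spow :: "'a::semigroup_mult \<Rightarrow> nat \<Rightarrow> 'a" where
  "spow a 0 = a"
| "spow a (Suc n) = spow a n * a"

definition eventually_regular :: "'a::semigroup_mult itself \<Rightarrow> bool" where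
  "eventually_regular _ \<longleftrightarrow>
     (\<forall>a::'a. \<exists>n::nat. \<exists>b. spow a n * b * spow a n = spow a n)"

definition idempotent :: "'a::semigroup_mult \<Rightarrow> bool" where
  "idempotent e \<longleftrightarrow> e * e = e"

text \<open>Primitive idempotent of a subsemigroup T (T = UNIV for S itself).\<close>
definition primitive_in :: "'a::semigroup_mult set \<Rightarrow> 'a \<Rightarrow> bool" where
  "primitive_in T e \<longleftrightarrow> e \<in> T \<and> idempotent e \<and>
     (\<forall>f\<in>T. idempotent f \<and> e * f = f \<and> f * e = f \<longrightarrow> f = e)"

definition principal_ideal :: "'a::semigroup_mult \<Rightarrow> 'a set" where
  "principal_ideal a = {x. x = a \<or> (\<exists>s. x = s * a) \<or> (\<exists>t. x = a * t) \<or> (\<exists>s t. x = s * a * t)}"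

definition J_rel :: "'a::semigroup_mult \<Rightarrow> 'a \<Rightarrow> bool" where
  "J_rel a b \<longleftrightarrow> principal_ideal a = principal_ideal b"

definition J_class :: "'a::semigroup_mult \<Rightarrow> 'a set" where
  "J_class a = {b. J_rel a b}"

definition J_le :: "'a::semigroup_mult set \<Rightarrow> 'a set \<Rightarrow> bool" where
  "J_le A B \<longleftrightarrow> (\<forall>a\<in>A. \<forall>b\<in>B. principal_ideal a \<subseteq> principal_ideal b)"

definition minimum_J_class :: "'a::semigroup_mult set \<Rightarrow> bool" where
  "minimum_J_class C \<longleftrightarrow> (\<exists>c. C = J_class c) \<and> (\<forall>a. J_le C (J_class a))"

definition subsemigroup :: "'a::semigroup_mult set \<Rightarrow> bool" where
  "subsemigroup T \<longleftrightarrow> (\<forall>x\<in>T. \<forall>y\<in>T. x * y \<in> T)"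

definition ideal_of :: "'a::semigroup_mult set \<Rightarrow> 'a set \<Rightarrow> bool" where
  "ideal_of T I \<longleftrightarrow> I \<noteq> {} \<and> I \<subseteq> T \<and>
     (\<forall>t\<in>T. \<forall>x\<in>I. t * x \<in> I \<and> x * t \<in> I)"

definition simple_semigroup :: "'a::semigroup_mult set \<Rightarrow> bool" where
  "simple_semigroup T \<longleftrightarrow> T \<noteq> {} \<and> subsemigroup T \<and> (\<forall>I. ideal_of T I \<longrightarrow> I = T)"

text \<open>Completely simple: simple and possessing a primitive idempotent (Howie).\<close>
definition completely_simple :: "'a::semigroup_mult set \<Rightarrow> bool" where
  "completely_simple T \<longleftrightarrow> simple_semigroup T \<and> (\<exists>e. primitive_in T e)"

end

theory Submission
  imports Defs
begin

text \<open>For any a, the element x = e a e lies in the local monoid e S e. Some power c of x is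
  regular, c b c = c, and then c (e b e) is an idempotent below e, hence equal to e by
  primitivity. Since c begins with x, this shows e \<in> S a S: the principal ideal S e S lies
  in every principal ideal, so J_e is the minimum J-class. Inside S e S every ideal I contains
  some x, hence e \<in> (S e S) x (S e S), hence all of S e S = (S e) e (e S).\<close>

lemma spow_Suc_left: "spow a (Suc n) = a * spow a n"
  by (induction n) (simp_all add: mult.assoc)

lemma spow_left_fixed: "e * a = a \<Longrightarrow> e * spow a n = spow a n"
  by (induction n) (simp_all add: mult.assoc[symmetric])

lemma spow_right_fixed: "a * e = a \<Longrightarrow> spow a n * e = spow a n"
  by (induction n) (simp_all add: mult.assoc)

lemma principal_ideal_self: "a \<in> principal_ideal a"
  unfolding principal_ideal_def by blast

lemma principal_ideal_subset:
  "b \<in> principal_ideal a \<Longrightarrow> principal_ideal b \<subseteq> principal_ideal a"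
  unfolding principal_ideal_def
  by (auto; metis mult.assoc)

lemma principal_ideal_mult_right: "x \<in> principal_ideal a \<Longrightarrow> x * y \<in> principal_ideal a"
  using principal_ideal_subset[of x a] unfolding principal_ideal_def by blast

lemma principal_ideal_mult_left: "x \<in> principal_ideal a \<Longrightarrow> y * x \<in> principal_ideal a"
  using principal_ideal_subset[of x a] unfolding principal_ideal_def by blast

lemma subsemigroup_principal_ideal: "subsemigroup (principal_ideal a)"
  unfolding subsemigroup_def by (blast intro: principal_ideal_mult_right)

lemma idempotent_mem_principal_ideal_iff:
  assumes "idempotent e"
  shows "e \<in> principal_ideal x \<longleftrightarrow> (\<exists>s t. e = s * x * t)"
  using assms unfolding principal_ideal_def idempotent_def
  by (auto; metis mult.assoc)

lemma mem_principal_ideal_idempotent_iff: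
  assumes "idempotent e"
  shows "y \<in> principal_ideal e \<longleftrightarrow> (\<exists>s t. y = s * e * t)"
  using assms unfolding principal_ideal_def idempotent_def
  by (auto; metis mult.assoc)

lemma primitive_absorbs_regular_local:
  assumes "primitive_in UNIV e"
    and ec: "e * c = c" and ce: "c * e = c" and regular: "c * b * c = c"
  shows "c * (e * b * e) = e"
proof -
  have "e * e = e" using assms(1) by (simp add: primitive_in_def idempotent_def)
  have "c * (e * b * e) * (c * (e * b * e)) = (c * e) * b * (e * c) * (e * b * e)"
    by (simp add: mult.assoc)
  also have "\<dots> = c * (e * b * e)" using ec ce regular by (simp add: mult.assoc)
  finally have "idempotent (c * (e * b * e))" by (simp add: idempotent_def)
  moreover have "e * (c * (e * b * e)) = c * (e * b * e)"
    using ec by (simp add: mult.assoc[symmetric])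
  moreover have "c * (e * b * e) * e = c * (e * b * e)"
    using \<open>e * e = e\<close> by (simp add: mult.assoc)
  ultimately show ?thesis
    using assms(1) unfolding primitive_in_def by blast
qed

lemma primitive_mem_principal_ideal:
  fixes e :: "'a::semigroup_mult"
  assumes "eventually_regular TYPE('a)" and "primitive_in UNIV e"
  shows "e \<in> principal_ideal a"
proof -
  have "e * e = e" using assms(2) by (simp add: primitive_in_def idempotent_def)
  define x where "x = e * a * e"
  have "e * x = x" "x * e = x"
    unfolding x_def using \<open>e * e = e\<close> by (simp_all add: mult.assoc[symmetric]) (simp add: mult.assoc)
  obtain n b where regular: "spow x n * b * spow x n = spow x n"
    using assms(1) unfolding eventually_regular_def by blast
  have "spow x n * (e * b * e) = e"
    using primitive_absorbs_regular_local[OF assms(2) _ _ regular]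
      spow_left_fixed[OF \<open>e * x = x\<close>] spow_right_fixed[OF \<open>x * e = x\<close>] by blast
  moreover obtain w where "spow x n * (e * b * e) = x * w"
  proof (cases n)
    case 0
    then show thesis using that by simp
  next
    case (Suc m)
    then show thesis using that[of "spow x m * (e * b * e)"] spow_Suc_left[of x m] by (metis mult.assoc)
  qed
  ultimately have "e = e * a * (e * w)"
    unfolding x_def by (simp add: mult.assoc)
  then show ?thesis
    using idempotent_mem_principal_ideal_iff[of e a] \<open>e * e = e\<close> idempotent_def by blast
qed

lemma ideal_of_sandwich:
  "ideal_of T I \<Longrightarrow> x \<in> I \<Longrightarrow> p \<in> T \<Longrightarrow> q \<in> T \<Longrightarrow> p * x * q \<in> I"
  unfolding ideal_of_def by blast

lemma simple_principal_ideal_idempotent: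
  assumes "idempotent e"
    and bottom: "\<And>x. x \<in> principal_ideal e \<Longrightarrow> e \<in> principal_ideal x"
  shows "simple_semigroup (principal_ideal e)"
  unfolding simple_semigroup_def
proof (intro conjI allI impI)
  let ?T = "principal_ideal e"
  have ee: "e * e = e" using assms(1) by (simp add: idempotent_def)
  show "?T \<noteq> {}" using principal_ideal_self by blast
  show "subsemigroup ?T" by (rule subsemigroup_principal_ideal)
  fix I assume I: "ideal_of ?T I"
  then obtain x where "x \<in> I" "I \<subseteq> ?T" unfolding ideal_of_def by blast
  obtain s t where "e = s * x * t"
    using bottom \<open>x \<in> I\<close> \<open>I \<subseteq> ?T\<close> idempotent_mem_principal_ideal_iff[OF assms(1)] by blast
  \<comment> \<open>multiplying by e on both sides moves the outer factors into the ideal S e S\<close>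
  then have "e = (e * s) * x * (t * e)" using ee by (metis mult.assoc)
  then have "e \<in> I"
    using ideal_of_sandwich[OF I \<open>x \<in> I\<close>] principal_ideal_self
      principal_ideal_mult_left principal_ideal_mult_right by metis
  have "?T \<subseteq> I"
  proof
    fix y assume "y \<in> ?T"
    then obtain s t where "y = s * e * t"
      using mem_principal_ideal_idempotent_iff[OF assms(1)] by blast
    then have "y = (s * e) * e * (e * t)" using ee by (metis mult.assoc)
    then show "y \<in> I"
      using ideal_of_sandwich[OF I \<open>e \<in> I\<close>] principal_ideal_self
        principal_ideal_mult_left principal_ideal_mult_right by metis
  qed
  then show "I = ?T" using \<open>I \<subseteq> ?T\<close> by blast
qed

lemma minimum_J_class_if_mem_all_principal_ideals:
  assumes "\<And>a. e \<in> principal_ideal a"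
  shows "minimum_J_class (J_class e)"
  using principal_ideal_subset[OF assms]
  unfolding minimum_J_class_def J_le_def J_class_def J_rel_def by auto

theorem lemma3p5:
  fixes e :: "'a::semigroup_mult"
  assumes "eventually_regular TYPE('a)"
    and "primitive_in UNIV e"
  shows "completely_simple (principal_ideal e) \<and> minimum_J_class (J_class e)"
proof
  have bottom: "\<And>a. e \<in> principal_ideal a"
    using primitive_mem_principal_ideal[OF assms] .
  have "idempotent e" using assms(2) by (simp add: primitive_in_def)
  then have "simple_semigroup (principal_ideal e)"
    using simple_principal_ideal_idempotent bottom by blast
  moreover have "primitive_in (principal_ideal e) e"
    using assms(2) principal_ideal_self unfolding primitive_in_def by blast
  ultimately show "completely_simple (principal_ideal e)"
    unfolding completely_simple_def by blast
  show "minimum_J_class (J_class e)"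
    using minimum_J_class_if_mem_all_principal_ideals bottom by blast
qed

end
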